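(* In system $\mathscr{E}$: if $\Phi\triangleright\Gamma\vdash^{(b,e,m,f)}t:\sigma$ and $t\to_h t'$ by a step of kind $\mathcal{R}\in\{b,e,m\}$, then there is $\Phi'\triangleright\Gamma\vdash^{(b',e',m',f)}t':\sigma$ where: if $\mathcal{R}=b$ then $b'=b-1$, $e'=e$, $m'=m$; if $\mathcal{R}=e$ then $b'=b$, $e'=e-1$, $m'=m$; if $\mathcal{R}=m$ then $b'=b$, $e'=e$, $m'=m-1$.
   Context: Pair pattern calculus: patterns $p,q ::= x\mid\langle p,q\rangle$ (linear); $\mathrm{var}(p)$ = variables of $p$; $p\# q$ means disjoint variables. Terms $t,u ::= x\mid\lambda p.t\mid\langle t,u\rangle\mid t\,u\mid t[p/u]$, $\mathrm{var}(p)$ bound in $t$ in $\lambda p.t$ and $t[p/u]$; $\mathrm{fv}$ as usual; terms modulo $\alpha$. List contexts $L::=\Box\mid L[p/u]$, $L\langle t\rangle$ plugging (possibly capturing), $\mathrm{bv}(L)$ variables bound by $L$; $t\{x/u\}$ capture-avoiding substitution; $\mathrm{abs}(t)$ iff $t=L\langle\lambda p.u\rangle$. Head reduction ($t\not\to_h$: no $u$ with $t\to_h u$): (b) $L\langle\lambda p.t\rangle u\to_h L\langle t[p/u]\rangle$ if $\mathrm{bv}(L)\cap\mathrm{fv}(u)=\emptyset$; (m) $t[\langle p_1,p_2\rangle/L\langle\langle u_1,u_2\rangle\rangle]\to_h L\langle t[p_1/u_1][p_2/u_2]\rangle$ if $t\not\to_h$ and $\mathrm{bv}(L)\cap\mathrm{fv}(t)=\emptyset$;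 (e) $t[x/u]\to_h t\{x/u\}$ if $t\not\to_h$; closure: $\lambda p.t\to_h\lambda p.t'$ if $t\to_h t'$; $tu\to_h t'u$ if $t\to_h t'$ and not $\mathrm{abs}(t)$; $t[p/u]\to_h t'[p/u]$ if $t\to_h t'$; $t[p/u]\to_h t[p/u']$ if $t\not\to_h$, $p$ not a variable, $u\to_h u'$. The kind of a step is the base rule (b), (e) or (m) it uses. System $\mathscr{E}$. Types: tight types $\mathtt{t} ::= \bullet_{\mathcal{N}}\mid\bullet_{\mathcal{M}}$; types $\sigma ::= \mathtt{t}\mid \mathcal{A}_1\times\mathcal{A}_2\mid \mathcal{A}\to\sigma$; multi-types $\mathcal{A} ::= [\sigma_k]_{k\in K}$ (finite, possibly empty). Contexts map variables to multi-types, $\mathrm{dom}(\Gamma)$ = variables with non-empty multi-type; $\wedge$ pointwise multiset union; $\Gamma|_p$ restriction to $\mathrm{var}(p)$; $\Gamma\setminus\mathrm{var}(p)$ removal. $\mathrm{tight}(\sigma)$ iff $\sigma\in\{\bullet_{\mathcal{N}},\bullet_{\mathcal{M}}\}$, extended elementwise. Rules: (pat_v) $x:\mathcal{A}\Vdash^{(1,0,0)} x:\mathcal{A}$. (pat_×) from $\Gamma\Vdash^{(e_p,m_p,f_p)}p:\mathcal{A}$, $\Delta\Vdash^{(e_q,m_q,f_q)}q:\mathcal{B}$, $p\#q$ infer $\Gamma\wedge\Delta\Vdash^{(e_p+e_q,1+m_p+m_q,f_p+f_q)}\langle p,q\rangle:[\mathcal{A}\times\mathcal{B}]$. (pat_p)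 if $\mathrm{dom}(\Gamma)\subseteq\mathrm{var}(\langle p,q\rangle)$ and $\mathrm{tight}(\Gamma)$ then $\Gamma\Vdash^{(0,0,1)}\langle p,q\rangle:[\bullet_{\mathcal{N}}]$. (ax) $x:[\sigma]\vdash^{(0,0,0,0)}x:\sigma$. (abs) from $\Gamma\vdash^{(b,e,m,f)}t:\sigma$ and $\Gamma|_p\Vdash^{(e_p,m_p,f_p)}p:\mathcal{A}$ infer $\Gamma\setminus\mathrm{var}(p)\vdash^{(b+1,e+e_p,m+m_p,f+f_p)}\lambda p.t:\mathcal{A}\to\sigma$. (abs_p) from $\Gamma\vdash^{(b,e,m,f)}t:\mathtt{t}$ ($\mathtt{t}$ tight) and $\mathrm{tight}(\Gamma|_p)$ infer $\Gamma\setminus\mathrm{var}(p)\vdash^{(b,e,m,f+1)}\lambda p.t:\bullet_{\mathcal{M}}$. (many) from $(\Gamma_k\vdash^{(b_k,e_k,m_k,f_k)}t:\sigma_k)_{k\in K}$ infer $\wedge_k\Gamma_k\vdash^{(\sum b_k,\sum e_k,\sum m_k,\sum f_k)}t:[\sigma_k]_{k\in K}$. (app) from $\Gamma\vdash^{(b_t,e_t,m_t,f_t)}t:\mathcal{A}\to\sigma$, $\Delta\vdash^{(b_u,e_u,m_u,f_u)}u:\mathcal{A}$ infer $\Gamma\wedge\Delta\vdash^{(b_t+b_u,e_t+e_u,m_t+m_u,f_t+f_u)}t\,u:\sigma$. (app_p) from $\Gamma\vdash^{(b,e,m,f)}t:\bullet_{\mathcal{N}}$ infer $\Gamma\vdash^{(b,e,m,f+1)}t\,u:\bullet_{\mathcal{N}}$.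 (pair) from $\Gamma\vdash^{(b_t,e_t,m_t,f_t)}t:\mathcal{A}$, $\Delta\vdash^{(b_u,e_u,m_u,f_u)}u:\mathcal{B}$ infer $\Gamma\wedge\Delta\vdash^{(b_t+b_u,e_t+e_u,m_t+m_u,f_t+f_u)}\langle t,u\rangle:\mathcal{A}\times\mathcal{B}$. (pair_p) $\vdash^{(0,0,0,1)}\langle t,u\rangle:\bullet_{\mathcal{M}}$. (match) from $\Gamma\vdash^{(b_t,e_t,m_t,f_t)}t:\sigma$, $\Gamma|_p\Vdash^{(e_p,m_p,f_p)}p:\mathcal{A}$, $\Delta\vdash^{(b_u,e_u,m_u,f_u)}u:\mathcal{A}$ infer $(\Gamma\setminus\mathrm{var}(p))\wedge\Delta\vdash^{(b_t+b_u,e_t+e_u+e_p,m_t+m_u+m_p,f_t+f_u+f_p)}t[p/u]:\sigma$. *)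

theory Defs
  imports Main "HOL-Library.Multiset"
begin

type_synonym var = nat

datatype pat = PV var | PP pat pat

datatype trm = TVar var | TLam pat trm | TApp trm trm | TPair trm trm
  | TSub trm pat trm   (* TSub t p u  stands for  t[p/u] *)

primrec pvars :: "pat \<Rightarrow> var set" where
  "pvars (PV x) = {x}"
| "pvars (PP p q) = pvars p \<union> pvars q"

primrec linear :: "pat \<Rightarrow> bool" where
  "linear (PV x) = True"
| "linear (PP p q) = (linear p \<and> linear q \<and> pvars p \<inter> pvars q = {})"

primrec wf_trm :: "trm \<Rightarrow> bool" where
  "wf_trm (TVar x) = True"
| "wf_trm (TLam p t) = (linear p \<and> wf_trm t)"
| "wf_trm (TApp t u) = (wf_trm t \<and> wf_trm u)"
| "wf_trm (TPair t u) = (wf_trm t \<and> wf_trm u)"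
| "wf_trm (TSub t p u) = (wf_trm t \<and> linear p \<and> wf_trm u)"

primrec fv :: "trm \<Rightarrow> var set" where
  "fv (TVar x) = {x}"
| "fv (TLam p t) = fv t - pvars p"
| "fv (TApp t u) = fv t \<union> fv u"
| "fv (TPair t u) = fv t \<union> fv u"
| "fv (TSub t p u) = (fv t - pvars p) \<union> fv u"

primrec bv :: "trm \<Rightarrow> var set" where
  "bv (TVar x) = {}"
| "bv (TLam p t) = pvars p \<union> bv t"
| "bv (TApp t u) = bv t \<union> bv u"
| "bv (TPair t u) = bv t \<union> bv u"
| "bv (TSub t p u) = pvars p \<union> bv t \<union> bv u"

primrec pperm :: "(var \<Rightarrow> var) \<Rightarrow> pat \<Rightarrow> pat" where
  "pperm \<pi> (PV x) = PV (\<pi> x)"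
| "pperm \<pi> (PP p q) = PP (pperm \<pi> p) (pperm \<pi> q)"

primrec perm :: "(var \<Rightarrow> var) \<Rightarrow> trm \<Rightarrow> trm" where
  "perm \<pi> (TVar x) = TVar (\<pi> x)"
| "perm \<pi> (TLam p t) = TLam (pperm \<pi> p) (perm \<pi> t)"
| "perm \<pi> (TApp t u) = TApp (perm \<pi> t) (perm \<pi> u)"
| "perm \<pi> (TPair t u) = TPair (perm \<pi> t) (perm \<pi> u)"
| "perm \<pi> (TSub t p u) = TSub (perm \<pi> t) (pperm \<pi> p) (perm \<pi> u)"

text \<open>Alpha-equivalence (nominal style: bound pattern variables renamed by a permutation
  fixing the other free variables of the body).\<close>
inductive alpha :: "trm \<Rightarrow> trm \<Rightarrow> bool" where
  a_var: "alpha (TVar x) (TVar x)"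
| a_lam: "\<lbrakk> bij \<pi>; \<forall>x \<in> fv t - pvars p. \<pi> x = x; pperm \<pi> p = p'; alpha (perm \<pi> t) t' \<rbrakk>
           \<Longrightarrow> alpha (TLam p t) (TLam p' t')"
| a_app: "\<lbrakk> alpha t t'; alpha u u' \<rbrakk> \<Longrightarrow> alpha (TApp t u) (TApp t' u')"
| a_pair: "\<lbrakk> alpha t t'; alpha u u' \<rbrakk> \<Longrightarrow> alpha (TPair t u) (TPair t' u')"
| a_sub: "\<lbrakk> bij \<pi>; \<forall>x \<in> fv t - pvars p. \<pi> x = x; pperm \<pi> p = p'; alpha (perm \<pi> t) t';
            alpha u u' \<rbrakk> \<Longrightarrow> alpha (TSub t p u) (TSub t' p' u')"

text \<open>Naive substitution t{x/u}; it is capture-avoiding whenever bv t is disjoint from fv u and x.\<close>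
primrec nsubst :: "trm \<Rightarrow> var \<Rightarrow> trm \<Rightarrow> trm" where
  "nsubst (TVar y) x u = (if y = x then u else TVar y)"
| "nsubst (TLam p t) x u = TLam p (nsubst t x u)"
| "nsubst (TApp t s) x u = TApp (nsubst t x u) (nsubst s x u)"
| "nsubst (TPair t s) x u = TPair (nsubst t x u) (nsubst s x u)"
| "nsubst (TSub t p s) x u = TSub (nsubst t x u) p (nsubst s x u)"

text \<open>List contexts L ::= Box | L[p/u], represented as lists (innermost substitution first).\<close>
type_synonym lctx = "(pat \<times> trm) list"

definition plug :: "lctx \<Rightarrow> trm \<Rightarrow> trm" where
  "plug L t = foldl (\<lambda>a (p, u). TSub a p u) t L"

definition bvL :: "lctx \<Rightarrow> var set" where
  "bvL L = (\<Union>(p, u) \<in> set L. pvars p)"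

definition is_abs :: "trm \<Rightarrow> bool" where
  "is_abs t = (\<exists>L p s. t = plug L (TLam p s))"

definition is_pvar :: "pat \<Rightarrow> bool" where
  "is_pvar p = (\<exists>x. p = PV x)"

datatype kind = KB | KE | KM

text \<open>hsteps t = the set of all (R, t'') with t ->_h t' by a step of kind R and t'' alpha-equivalent to t'.
  Defined by structural recursion following the stratified definition of the paper; the side
  conditions on bound variables are imposed on some alpha-variant of the redex.
  "t does not reduce" is  hsteps t = {}.\<close>
primrec hsteps :: "trm \<Rightarrow> (kind \<times> trm) set" where
  "hsteps (TVar x) = {}"
| "hsteps (TLam p t) = {(k, r). \<exists>t'. (k, t') \<in> hsteps t \<and> alpha r (TLam p t')}"
| "hsteps (TApp t u) =
     {(k, r). k = KB \<and> (\<exists>L p s u'. alpha (TApp t u) (TApp (plug L (TLam p s)) u')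
                         \<and> bvL L \<inter> fv u' = {} \<and> alpha r (plug L (TSub s p u')))}
   \<union> {(k, r). \<not> is_abs t \<and> (\<exists>t'. (k, t') \<in> hsteps t \<and> alpha r (TApp t' u))}"
| "hsteps (TPair t u) = {}"
| "hsteps (TSub t p u) =
     {(k, r). \<exists>t'. (k, t') \<in> hsteps t \<and> alpha r (TSub t' p u)}
   \<union> (if hsteps t = {} then
        {(k, r). k = KM \<and> (\<exists>s p1 p2 L u1 u2.
             alpha (TSub t p u) (TSub s (PP p1 p2) (plug L (TPair u1 u2)))
             \<and> bvL L \<inter> fv s = {} \<and> pvars p2 \<inter> fv u1 = {}
             \<and> alpha r (plug L (TSub (TSub s p1 u1) p2 u2)))}
      \<union> {(k, r). k = KE \<and> (\<exists>x t0. p = PV x \<and> alpha t t0 \<and> bv t0 \<inter> (fv u \<union> {x}) = {}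
             \<and> alpha r (nsubst t0 x u))}
      \<union> {(k, r). \<not> is_pvar p \<and> (\<exists>u'. (k, u') \<in> hsteps u \<and> alpha r (TSub t p u'))}
      else {})"

datatype ty = TyN | TyM | Prod "ty multiset" "ty multiset" | Arr "ty multiset" ty

definition tight :: "ty \<Rightarrow> bool" where
  "tight \<sigma> = (\<sigma> = TyN \<or> \<sigma> = TyM)"

type_synonym ctx = "var \<Rightarrow> ty multiset"

definition ctx_empty :: ctx where "ctx_empty = (\<lambda>_. {#})"
definition ctx_one :: "var \<Rightarrow> ty multiset \<Rightarrow> ctx" where
  "ctx_one x A = (\<lambda>y. if y = x then A else {#})"
definition ctx_union :: "ctx \<Rightarrow> ctx \<Rightarrow> ctx" where
  "ctx_union \<Gamma> \<Delta> = (\<lambda>x. \<Gamma> x + \<Delta> x)"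
definition ctx_dom :: "ctx \<Rightarrow> var set" where
  "ctx_dom \<Gamma> = {x. \<Gamma> x \<noteq> {#}}"
definition restrict :: "ctx \<Rightarrow> pat \<Rightarrow> ctx" where
  "restrict \<Gamma> p = (\<lambda>x. if x \<in> pvars p then \<Gamma> x else {#})"
definition remove :: "ctx \<Rightarrow> pat \<Rightarrow> ctx" where
  "remove \<Gamma> p = (\<lambda>x. if x \<in> pvars p then {#} else \<Gamma> x)"
definition tight_ctx :: "ctx \<Rightarrow> bool" where
  "tight_ctx \<Gamma> = (\<forall>x. \<forall>\<sigma> \<in># \<Gamma> x. tight \<sigma>)"

inductive ptyp :: "ctx \<Rightarrow> pat \<Rightarrow> ty multiset \<Rightarrow> nat \<Rightarrow> nat \<Rightarrow> nat \<Rightarrow> bool" where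
  pat_v: "ptyp (ctx_one x A) (PV x) A 1 0 0"
| pat_prod: "\<lbrakk> ptyp \<Gamma> p A ep mp fp; ptyp \<Delta> q B eq mq fq; pvars p \<inter> pvars q = {} \<rbrakk>
     \<Longrightarrow> ptyp (ctx_union \<Gamma> \<Delta>) (PP p q) {#Prod A B#} (ep + eq) (Suc (mp + mq)) (fp + fq)"
| pat_p: "\<lbrakk> ctx_dom \<Gamma> \<subseteq> pvars (PP p q); tight_ctx \<Gamma> \<rbrakk> \<Longrightarrow> ptyp \<Gamma> (PP p q) {#TyN#} 0 0 1"

inductive has_type :: "ctx \<Rightarrow> trm \<Rightarrow> ty \<Rightarrow> nat \<Rightarrow> nat \<Rightarrow> nat \<Rightarrow> nat \<Rightarrow> bool"
  and has_mtype :: "ctx \<Rightarrow> trm \<Rightarrow> ty multiset \<Rightarrow> nat \<Rightarrow> nat \<Rightarrow> nat \<Rightarrow> nat \<Rightarrow> bool" where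
  ax: "has_type (ctx_one x {#\<sigma>#}) (TVar x) \<sigma> 0 0 0 0"
| abs: "\<lbrakk> has_type \<Gamma> t \<sigma> b e m f; ptyp (restrict \<Gamma> p) p A ep mp fp \<rbrakk>
     \<Longrightarrow> has_type (remove \<Gamma> p) (TLam p t) (Arr A \<sigma>) (Suc b) (e + ep) (m + mp) (f + fp)"
| abs_p: "\<lbrakk> has_type \<Gamma> t \<tau> b e m f; tight \<tau>; tight_ctx (restrict \<Gamma> p) \<rbrakk>
     \<Longrightarrow> has_type (remove \<Gamma> p) (TLam p t) TyM b e m (Suc f)"
| many_empty: "has_mtype ctx_empty t {#} 0 0 0 0"
| many_add: "\<lbrakk> has_type \<Gamma> t \<sigma> b e m f; has_mtype \<Delta> t A b' e' m' f' \<rbrakk>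
     \<Longrightarrow> has_mtype (ctx_union \<Gamma> \<Delta>) t (add_mset \<sigma> A) (b + b') (e + e') (m + m') (f + f')"
| app: "\<lbrakk> has_type \<Gamma> t (Arr A \<sigma>) bt et mt ft; has_mtype \<Delta> u A bu eu mu fu \<rbrakk>
     \<Longrightarrow> has_type (ctx_union \<Gamma> \<Delta>) (TApp t u) \<sigma> (bt + bu) (et + eu) (mt + mu) (ft + fu)"
| app_p: "has_type \<Gamma> t TyN b e m f \<Longrightarrow> has_type \<Gamma> (TApp t u) TyN b e m (Suc f)"
| pair: "\<lbrakk> has_mtype \<Gamma> t A bt et mt ft; has_mtype \<Delta> u B bu eu mu fu \<rbrakk>
     \<Longrightarrow> has_type (ctx_union \<Gamma> \<Delta>) (TPair t u) (Prod A B) (bt + bu) (et + eu) (mt + mu) (ft + fu)"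
| pair_p: "has_type ctx_empty (TPair t u) TyM 0 0 0 1"
| match: "\<lbrakk> has_type \<Gamma> t \<sigma> bt et mt ft; ptyp (restrict \<Gamma> p) p A ep mp fp;
            has_mtype \<Delta> u A bu eu mu fu \<rbrakk>
     \<Longrightarrow> has_type (ctx_union (remove \<Gamma> p) \<Delta>) (TSub t p u) \<sigma>
           (bt + bu) (et + eu + ep) (mt + mu + mp) (ft + fu + fp)"

end

(*
  All typing rules are compositional, so a head step only has to be checked at its redex: the
  positions where head reduction may take place (under abstractions, on the function side of an
  application, in the body of an explicit substitution and in the argument of one with a pair
  pattern, under list contexts) transport typings with unchanged counters. At the redex, the abs
  rule typing \<lambda>p.t turns into the match rule typing t[p/u], losing exactly the b of the
  abstraction; an e-step consumes the pat_v typing of x, whose e-counter is 1, by the substitution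
  lemma; an m-step splits the pat_\<times> typing of <p1,p2>, whose m-counter is 1 + m1 + m2, into two
  match rules.

  Reduction is taken up to alpha-equivalence, so alpha-equivalent terms must have the same
  typings: typing is equivariant under renamings, and renaming the pattern of a binder fixes the
  free variables, hence the typing context. A list context around a redex is commuted outwards
  because its bound variables avoid the rest of the redex; for the m-step this also uses that a
  pair pattern is typed with a single type.
*)
theory Submission
  imports Defs "HOL-Library.Product_Plus"
begin

inductive_cases has_type_TLamE [consumes 1, case_names abs abs_p]: "has_type \<Gamma> (TLam p t) \<sigma> b e m f"
inductive_cases has_type_TAppE [consumes 1, case_names app app_p]: "has_type \<Gamma> (TApp t u) \<sigma> b e m f"
inductive_cases has_type_TPairE [consumes 1, case_names pair pair_p]: "has_type \<Gamma> (TPair t u) \<sigma> b e m f"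
inductive_cases has_type_TSubE [consumes 1, case_names match]: "has_type \<Gamma> (TSub t p u) \<sigma> b e m f"
inductive_cases has_mtype_emptyE: "has_mtype \<Gamma> t {#} b e m f"
inductive_cases has_mtype_add_msetE: "has_mtype \<Gamma> t (add_mset \<sigma> A) b e m f"
inductive_cases ptyp_PVE: "ptyp \<Gamma> (PV x) A e m f"
inductive_cases ptyp_PPE [consumes 1, case_names pat_prod pat_p]: "ptyp \<Gamma> (PP p q) A e m f"

lemma ctx_union_commute: "ctx_union \<Gamma> \<Delta> = ctx_union \<Delta> \<Gamma>"
  by (simp add: ctx_union_def fun_eq_iff add.commute)

lemma ctx_union_assoc: "ctx_union (ctx_union \<Gamma> \<Delta>) \<Theta> = ctx_union \<Gamma> (ctx_union \<Delta> \<Theta>)"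
  by (simp add: ctx_union_def fun_eq_iff add.assoc)

lemma ctx_union_left_commute: "ctx_union \<Gamma> (ctx_union \<Delta> \<Theta>) = ctx_union \<Delta> (ctx_union \<Gamma> \<Theta>)"
  by (simp add: ctx_union_def fun_eq_iff add.left_commute)

lemmas ctx_union_ac = ctx_union_assoc ctx_union_commute ctx_union_left_commute

lemma ctx_union_empty [simp]: "ctx_union \<Gamma> ctx_empty = \<Gamma>" "ctx_union ctx_empty \<Gamma> = \<Gamma>"
  by (simp_all add: ctx_union_def ctx_empty_def)

lemma remove_ctx_union: "remove (ctx_union \<Gamma> \<Delta>) p = ctx_union (remove \<Gamma> p) (remove \<Delta> p)"
  by (simp add: remove_def ctx_union_def fun_eq_iff)

lemma restrict_ctx_union: "restrict (ctx_union \<Gamma> \<Delta>) p = ctx_union (restrict \<Gamma> p) (restrict \<Delta> p)"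
  by (simp add: restrict_def ctx_union_def fun_eq_iff)

lemma ctx_one_apply: "ctx_one y A x = (if x = y then A else {#})"
  by (simp add: ctx_one_def)

lemma ctx_empty_apply: "ctx_empty x = {#}"
  by (simp add: ctx_empty_def)

lemma remove_ctx_one: "remove (ctx_one x A) p = (if x \<in> pvars p then ctx_empty else ctx_one x A)"
  by (simp add: remove_def ctx_one_def ctx_empty_def fun_eq_iff)

lemma remove_ctx_empty [simp]: "remove ctx_empty p = ctx_empty"
  by (simp add: remove_def ctx_empty_def fun_eq_iff)

lemma remove_commute: "remove (remove \<Gamma> p) q = remove (remove \<Gamma> q) p"
  by (simp add: remove_def fun_eq_iff)

lemma restrict_remove: "pvars p \<inter> pvars q = {} \<Longrightarrow> restrict (remove \<Gamma> q) p = restrict \<Gamma> p"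
  by (auto simp: restrict_def remove_def fun_eq_iff)

lemma remove_PP: "remove (remove \<Gamma> p) q = remove \<Gamma> (PP p q)"
  by (simp add: remove_def fun_eq_iff)

lemma restrict_PP_split:
  assumes "restrict \<Gamma> (PP p q) = ctx_union \<Gamma>1 \<Gamma>2" and "pvars p \<inter> pvars q = {}"
    and "ctx_dom \<Gamma>1 \<subseteq> pvars p" and "ctx_dom \<Gamma>2 \<subseteq> pvars q"
  shows "restrict \<Gamma> p = \<Gamma>1" and "restrict \<Gamma> q = \<Gamma>2"
proof -
  have sum: "\<Gamma>1 x + \<Gamma>2 x = (if x \<in> pvars p \<union> pvars q then \<Gamma> x else {#})" for x
    using fun_cong[OF assms(1), of x] by (simp add: restrict_def ctx_union_def)
  have "x \<notin> pvars p \<Longrightarrow> \<Gamma>1 x = {#}" and "x \<notin> pvars q \<Longrightarrow> \<Gamma>2 x = {#}" for x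
    using assms(3,4) by (auto simp: ctx_dom_def)
  with sum assms(2) show "restrict \<Gamma> p = \<Gamma>1" and "restrict \<Gamma> q = \<Gamma>2"
    unfolding restrict_def fun_eq_iff by (metis add_0 add.right_neutral disjoint_iff Un_iff)+
qed

lemma remove_disjoint: "ctx_dom \<Gamma> \<inter> pvars p = {} \<Longrightarrow> remove \<Gamma> p = \<Gamma>"
  by (auto simp: remove_def ctx_dom_def fun_eq_iff)

lemma restrict_disjoint: "ctx_dom \<Gamma> \<inter> pvars p = {} \<Longrightarrow> restrict \<Gamma> p = ctx_empty"
  by (auto simp: restrict_def ctx_dom_def ctx_empty_def fun_eq_iff)

lemma ptyp_ctx_dom: "ptyp \<Gamma> p A e m f \<Longrightarrow> ctx_dom \<Gamma> \<subseteq> pvars p"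
  by (induction rule: ptyp.induct) (auto simp: ctx_dom_def ctx_one_def ctx_union_def)

lemma has_type_ctx_dom:
  "has_type \<Gamma> t \<sigma> b e m f \<Longrightarrow> ctx_dom \<Gamma> \<subseteq> fv t"
  "has_mtype \<Gamma> t A b e m f \<Longrightarrow> ctx_dom \<Gamma> \<subseteq> fv t"
  by (induction rule: has_type_has_mtype.inducts)
     (auto simp: ctx_dom_def ctx_one_def ctx_union_def remove_def ctx_empty_def)

lemma has_mtype_ctx_dom_disjoint: "has_mtype \<Delta> u A b e m f \<Longrightarrow> fv u \<inter> S = {} \<Longrightarrow> ctx_dom \<Delta> \<inter> S = {}"
  using has_type_ctx_dom(2) by blast

lemmas has_mtype_induct = has_type_has_mtype.inducts(2)[where ?P1.0 = "\<lambda>_ _ _ _ _ _ _. True",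
  simplified, consumes 1, case_names many_empty many_add]

lemma has_mtype_mono:
  assumes "has_mtype \<Gamma> t A b e m f"
    and "\<And>\<Gamma> \<sigma> b e m f. has_type \<Gamma> t \<sigma> b e m f \<Longrightarrow> has_type \<Gamma> t' \<sigma> b e m f"
  shows "has_mtype \<Gamma> t' A b e m f"
  using assms by (induction rule: has_mtype_induct) (auto intro: has_type_has_mtype.intros)

lemma has_mtype_split:
  "has_mtype \<Delta> t M b e m f \<Longrightarrow> M = A + B \<Longrightarrow>
   \<exists>\<Delta>1 \<Delta>2 b1 e1 m1 f1 b2 e2 m2 f2. has_mtype \<Delta>1 t A b1 e1 m1 f1 \<and> has_mtype \<Delta>2 t B b2 e2 m2 f2
     \<and> \<Delta> = ctx_union \<Delta>1 \<Delta>2 \<and> b = b1 + b2 \<and> e = e1 + e2 \<and> m = m1 + m2 \<and> f = f1 + f2"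
proof (induction arbitrary: A B rule: has_mtype_induct)
  case (many_empty t)
  then show ?case by (auto intro!: has_type_has_mtype.many_empty exI[of _ ctx_empty])
next
  case (many_add \<Gamma> t \<sigma> b e m f \<Delta> M b' e' m' f')
  have split_off: "\<exists>\<Delta>1 \<Delta>2 b1 e1 m1 f1 b2 e2 m2 f2. has_mtype \<Delta>1 t A b1 e1 m1 f1 \<and> has_mtype \<Delta>2 t B b2 e2 m2 f2
     \<and> ctx_union \<Gamma> \<Delta> = ctx_union \<Delta>1 \<Delta>2 \<and> b + b' = b1 + b2 \<and> e + e' = e1 + e2 \<and> m + m' = m1 + m2
     \<and> f + f' = f1 + f2" if "add_mset \<sigma> M = A + B" "\<sigma> \<in># A" for A B
  proof -
    have "M = (A - {#\<sigma>#}) + B"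
      using that by (metis add_mset_remove_trivial insert_DiffM union_mset_add_mset_left)
    then obtain \<Delta>1 \<Delta>2 b1 e1 m1 f1 b2 e2 m2 f2 where
      "has_mtype \<Delta>1 t (A - {#\<sigma>#}) b1 e1 m1 f1" "has_mtype \<Delta>2 t B b2 e2 m2 f2"
      "\<Delta> = ctx_union \<Delta>1 \<Delta>2" "b' = b1 + b2" "e' = e1 + e2" "m' = m1 + m2" "f' = f1 + f2"
      using many_add.IH by blast
    moreover have "has_mtype (ctx_union \<Gamma> \<Delta>1) t A (b + b1) (e + e1) (m + m1) (f + f1)"
      using has_type_has_mtype.many_add[OF many_add.hyps(1) \<open>has_mtype \<Delta>1 t (A - {#\<sigma>#}) b1 e1 m1 f1\<close>]
        \<open>\<sigma> \<in># A\<close> by simp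
    ultimately show ?thesis by (force simp: ctx_union_assoc)
  qed
  show ?case
  proof (cases "\<sigma> \<in># A")
    case True
    then show ?thesis using split_off many_add.prems by blast
  next
    case False
    then have "\<sigma> \<in># B" using many_add.prems by (metis union_iff union_single_eq_member)
    then obtain \<Delta>1 \<Delta>2 b1 e1 m1 f1 b2 e2 m2 f2 where
      "has_mtype \<Delta>1 t B b1 e1 m1 f1" "has_mtype \<Delta>2 t A b2 e2 m2 f2"
      "ctx_union \<Gamma> \<Delta> = ctx_union \<Delta>1 \<Delta>2" "b + b' = b1 + b2" "e + e' = e1 + e2" "m + m' = m1 + m2"
      "f + f' = f1 + f2"
      using split_off[of B A] many_add.prems by (auto simp: add.commute)
    then show ?thesis by (metis ctx_union_commute add.commute)
  qed
qed

lemma has_mtype_empty_iff [simp]: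
  "has_mtype \<Gamma> t {#} b e m f \<longleftrightarrow> \<Gamma> = ctx_empty \<and> b = 0 \<and> e = 0 \<and> m = 0 \<and> f = 0"
  by (auto elim: has_mtype_emptyE intro: many_empty)

lemma has_mtype_single_iff: "has_mtype \<Gamma> t {#\<sigma>#} b e m f \<longleftrightarrow> has_type \<Gamma> t \<sigma> b e m f"
proof
  show "has_mtype \<Gamma> t {#\<sigma>#} b e m f \<Longrightarrow> has_type \<Gamma> t \<sigma> b e m f"
    by (erule has_mtype_add_msetE) (auto elim!: has_mtype_emptyE)
qed (use many_add[OF _ many_empty] in fastforce)

lemma ptyp_not_pvar_single: "ptyp \<Gamma> p A e m f \<Longrightarrow> \<not> is_pvar p \<Longrightarrow> \<exists>\<tau>. A = {#\<tau>#}"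
  by (induction rule: ptyp.induct) (auto simp: is_pvar_def)

subsection \<open>Renaming\<close>

definition rename_ctx :: "(var \<Rightarrow> var) \<Rightarrow> ctx \<Rightarrow> ctx" where
  "rename_ctx \<pi> \<Gamma> = (\<lambda>y. \<Gamma> (inv \<pi> y))"

lemma pvars_pperm: "pvars (pperm \<pi> p) = \<pi> ` pvars p"
  by (induction p) auto

lemma fv_perm: "inj \<pi> \<Longrightarrow> fv (perm \<pi> t) = \<pi> ` fv t"
  by (induction t) (auto simp: pvars_pperm image_Un image_set_diff)

lemma perm_comp: "perm \<pi> (perm \<rho> t) = perm (\<pi> \<circ> \<rho>) t"
proof -
  have "pperm \<pi> (pperm \<rho> p) = pperm (\<pi> \<circ> \<rho>) p" for p
    by (induction p) auto
  then show ?thesis by (induction t) auto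
qed

lemma perm_id: "perm id t = t"
proof -
  have "pperm id p = p" for p
    by (induction p) auto
  then show ?thesis by (induction t) auto
qed

context
  fixes \<pi> :: "var \<Rightarrow> var"
  assumes bij: "bij \<pi>"
begin

lemma inv_apply [simp]: "inv \<pi> (\<pi> x) = x" "\<pi> (inv \<pi> x) = x"
  using bij by (simp_all add: bij_is_inj bij_is_surj surj_f_inv_f)

lemma mem_image_iff_inv: "y \<in> \<pi> ` P \<longleftrightarrow> inv \<pi> y \<in> P"
  by (metis image_eqI imageE inv_apply)

lemma rename_ctx_one [simp]: "rename_ctx \<pi> (ctx_one x A) = ctx_one (\<pi> x) A"
  by (auto simp: rename_ctx_def ctx_one_def fun_eq_iff)

lemma rename_ctx_union [simp]:
  "rename_ctx \<pi> (ctx_union \<Gamma> \<Delta>) = ctx_union (rename_ctx \<pi> \<Gamma>) (rename_ctx \<pi> \<Delta>)"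
  by (simp add: rename_ctx_def ctx_union_def)

lemma rename_ctx_empty [simp]: "rename_ctx \<pi> ctx_empty = ctx_empty"
  by (simp add: rename_ctx_def ctx_empty_def)

lemma rename_restrict [simp]: "rename_ctx \<pi> (restrict \<Gamma> p) = restrict (rename_ctx \<pi> \<Gamma>) (pperm \<pi> p)"
  by (simp add: rename_ctx_def restrict_def fun_eq_iff pvars_pperm mem_image_iff_inv)

lemma rename_remove [simp]: "rename_ctx \<pi> (remove \<Gamma> p) = remove (rename_ctx \<pi> \<Gamma>) (pperm \<pi> p)"
  by (simp add: rename_ctx_def remove_def fun_eq_iff pvars_pperm mem_image_iff_inv)

lemma tight_ctx_rename [simp]: "tight_ctx (rename_ctx \<pi> \<Gamma>) \<longleftrightarrow> tight_ctx \<Gamma>"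
  unfolding tight_ctx_def rename_ctx_def by (metis inv_apply(1))

lemma ctx_dom_rename [simp]: "ctx_dom (rename_ctx \<pi> \<Gamma>) = \<pi> ` ctx_dom \<Gamma>"
  by (auto simp: ctx_dom_def rename_ctx_def mem_image_iff_inv)

lemma ptyp_rename: "ptyp \<Gamma> p A e m f \<Longrightarrow> ptyp (rename_ctx \<pi> \<Gamma>) (pperm \<pi> p) A e m f"
proof (induction rule: ptyp.induct)
  case (pat_prod \<Gamma> p A ep mp fp \<Delta> q B eq mq fq)
  have "pvars (pperm \<pi> p) \<inter> pvars (pperm \<pi> q) = {}"
    using pat_prod.hyps(3) by (simp add: pvars_pperm image_Int[symmetric] bij_is_inj[OF bij])
  with pat_prod.IH show ?case by (simp add: ptyp.pat_prod)
next
  case (pat_p \<Gamma> p q)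
  then show ?case
    using ptyp.pat_p[of "rename_ctx \<pi> \<Gamma>" "pperm \<pi> p" "pperm \<pi> q"] by (auto simp: pvars_pperm)
qed (simp del: One_nat_def add: ptyp.pat_v)

lemma has_type_rename:
  "has_type \<Gamma> t \<sigma> b e m f \<Longrightarrow> has_type (rename_ctx \<pi> \<Gamma>) (perm \<pi> t) \<sigma> b e m f"
  "has_mtype \<Gamma> t A b e m f \<Longrightarrow> has_mtype (rename_ctx \<pi> \<Gamma>) (perm \<pi> t) A b e m f"
proof (induction rule: has_type_has_mtype.inducts)
  case (abs \<Gamma> t \<sigma> b e m f p A ep mp fp)
  with ptyp_rename[OF abs.hyps(2)] show ?case by (simp add: has_type_has_mtype.abs)
next
  case (abs_p \<Gamma> t \<tau> b e m f p)
  have "tight_ctx (restrict (rename_ctx \<pi> \<Gamma>) (pperm \<pi> p))"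
    using abs_p.hyps(3) by (simp flip: rename_restrict)
  with abs_p show ?case by (simp add: has_type_has_mtype.abs_p)
next
  case (match \<Gamma> t \<sigma> bt et mt ft p A ep mp fp \<Delta> u bu eu mu fu)
  with ptyp_rename[OF match.hyps(2)] show ?case by (simp add: has_type_has_mtype.match)
qed (auto intro: has_type_has_mtype.intros simp del: One_nat_def)

lemma rename_ctx_fixed:
  assumes "\<forall>x \<in> ctx_dom \<Gamma>. \<pi> x = x"
  shows "rename_ctx \<pi> \<Gamma> = \<Gamma>"
proof -
  have "\<Gamma> (inv \<pi> y) = \<Gamma> y" for y
  proof (cases "\<Gamma> y = {#}")
    case True
    have "\<Gamma> (inv \<pi> y) = {#}"
    proof (rule ccontr)
      assume "\<Gamma> (inv \<pi> y) \<noteq> {#}"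
      then have "\<pi> (inv \<pi> y) = inv \<pi> y" using assms unfolding ctx_dom_def by blast
      with True \<open>\<Gamma> (inv \<pi> y) \<noteq> {#}\<close> show False by simp
    qed
    with True show ?thesis by simp
  next
    case False
    then have "\<pi> y = y" using assms by (simp add: ctx_dom_def)
    then show ?thesis by (metis inv_apply(1))
  qed
  then show ?thesis by (simp add: rename_ctx_def)
qed

lemma has_type_perm_fixing:
  assumes "\<forall>x \<in> fv t. \<pi> x = x" and "has_type \<Gamma> t \<sigma> b e m f"
  shows "has_type \<Gamma> (perm \<pi> t) \<sigma> b e m f"
proof -
  have "rename_ctx \<pi> \<Gamma> = \<Gamma>"
    using assms has_type_ctx_dom(1)[OF assms(2)] by (intro rename_ctx_fixed) blast
  then show ?thesis using has_type_rename(1)[OF assms(2)] by simp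
qed

end

subsection \<open>Alpha-equivalent terms have the same typings\<close>

definition same_typings :: "trm \<Rightarrow> trm \<Rightarrow> bool" where
  "same_typings t t' \<longleftrightarrow> (\<forall>\<Gamma> \<sigma> b e m f. has_type \<Gamma> t \<sigma> b e m f \<longleftrightarrow> has_type \<Gamma> t' \<sigma> b e m f)"

lemma same_typings_refl: "same_typings t t"
  by (simp add: same_typings_def)

lemma same_typings_sym: "same_typings t t' \<Longrightarrow> same_typings t' t"
  by (simp add: same_typings_def)

lemma same_typings_trans: "same_typings t s \<Longrightarrow> same_typings s t' \<Longrightarrow> same_typings t t'"
  by (simp add: same_typings_def)

lemma same_typings_has_type:
  "same_typings t t' \<Longrightarrow> has_type \<Gamma> t \<sigma> b e m f \<longleftrightarrow> has_type \<Gamma> t' \<sigma> b e m f"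
  by (simp add: same_typings_def)

lemma same_typings_has_mtype:
  assumes "same_typings t t'"
  shows "has_mtype \<Gamma> t A b e m f \<longleftrightarrow> has_mtype \<Gamma> t' A b e m f"
  using has_mtype_mono[of \<Gamma> t A b e m f t'] has_mtype_mono[of \<Gamma> t' A b e m f t] assms
  unfolding same_typings_def by blast

lemma same_typings_TLam_rename:
  assumes "bij \<pi>" and fixed: "\<forall>x \<in> fv t - pvars p. \<pi> x = x"
  shows "same_typings (TLam p t) (TLam (pperm \<pi> p) (perm \<pi> t))"
proof -
  let ?s = "TLam p t"
  have "fv (perm \<pi> ?s) = \<pi> ` fv ?s"
    by (rule fv_perm) (rule bij_is_inj[OF \<open>bij \<pi>\<close>])
  also have "\<dots> = fv ?s"
    using fixed by force
  finally have "fv (perm \<pi> ?s) = fv ?s" .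
  have inv_fixed: "\<forall>x \<in> fv (perm \<pi> ?s). inv \<pi> x = x"
  proof
    fix x
    assume "x \<in> fv (perm \<pi> ?s)"
    then have "\<pi> x = x" using fixed \<open>fv (perm \<pi> ?s) = fv ?s\<close> by (simp del: perm.simps)
    then show "inv \<pi> x = x" using inv_apply(1)[OF \<open>bij \<pi>\<close>, of x] by simp
  qed
  have inv_perm: "perm (inv \<pi>) (perm \<pi> ?s) = ?s"
    using \<open>bij \<pi>\<close> by (simp only: perm_comp inv_o_cancel bij_is_inj perm_id)
  show ?thesis
    unfolding same_typings_def
  proof (intro allI iffI)
    fix \<Gamma> \<sigma> b e m f
    assume "has_type \<Gamma> ?s \<sigma> b e m f"
    from has_type_perm_fixing[OF \<open>bij \<pi>\<close> _ this] fixed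
    show "has_type \<Gamma> (TLam (pperm \<pi> p) (perm \<pi> t)) \<sigma> b e m f" by simp
  next
    fix \<Gamma> \<sigma> b e m f
    assume "has_type \<Gamma> (TLam (pperm \<pi> p) (perm \<pi> t)) \<sigma> b e m f"
    then have "has_type \<Gamma> (perm (inv \<pi>) (perm \<pi> ?s)) \<sigma> b e m f"
      using has_type_perm_fixing[OF bij_imp_bij_inv[OF \<open>bij \<pi>\<close>] inv_fixed] by simp
    then show "has_type \<Gamma> ?s \<sigma> b e m f" by (simp only: inv_perm)
  qed
qed

lemma same_typings_TLam:
  assumes "same_typings t t'"
  shows "same_typings (TLam p t) (TLam p t')"
proof -
  have "has_type \<Gamma> (TLam p s') \<sigma> b e m f"
    if "same_typings s s'" and "has_type \<Gamma> (TLam p s) \<sigma> b e m f" for s s' \<Gamma> \<sigma> b e m f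
    using that(2) by (cases rule: has_type_TLamE)
      (auto intro: has_type_has_mtype.abs has_type_has_mtype.abs_p simp: same_typings_has_type[OF that(1)])
  from this[OF assms] this[OF same_typings_sym[OF assms]] show ?thesis
    unfolding same_typings_def by blast
qed

lemma same_typings_TApp:
  assumes "same_typings t t'" and "same_typings u u'"
  shows "same_typings (TApp t u) (TApp t' u')"
proof -
  have "has_type \<Gamma> (TApp s' v') \<sigma> b e m f"
    if "same_typings s s'" and "same_typings v v'" and "has_type \<Gamma> (TApp s v) \<sigma> b e m f"
    for s s' v v' \<Gamma> \<sigma> b e m f
    using that(3) by (cases rule: has_type_TAppE)
      (auto intro: has_type_has_mtype.app has_type_has_mtype.app_p
        simp: same_typings_has_type[OF that(1)] same_typings_has_mtype[OF that(2)])
  from this[OF assms] this[OF assms[THEN same_typings_sym]] show ?thesis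
    unfolding same_typings_def by blast
qed

lemma same_typings_TPair:
  assumes "same_typings t t'" and "same_typings u u'"
  shows "same_typings (TPair t u) (TPair t' u')"
proof -
  have "has_type \<Gamma> (TPair s' v') \<sigma> b e m f"
    if "same_typings s s'" and "same_typings v v'" and "has_type \<Gamma> (TPair s v) \<sigma> b e m f"
    for s s' v v' \<Gamma> \<sigma> b e m f
    using that(3) by (cases rule: has_type_TPairE)
      (auto intro: has_type_has_mtype.pair has_type_has_mtype.pair_p[simplified]
        simp: same_typings_has_mtype[OF that(1)] same_typings_has_mtype[OF that(2)])
  from this[OF assms] this[OF assms[THEN same_typings_sym]] show ?thesis
    unfolding same_typings_def by blast
qed

text \<open>Explicit substitutions are typed like beta-redexes; this reduces alpha-renaming of their
  pattern to that of an abstraction.\<close>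

lemma has_type_TSub_redexI:
  assumes "has_type \<Gamma> (TLam p t) (Arr A \<sigma>) (Suc b) e m f" and "has_mtype \<Delta> u A b' e' m' f'"
  shows "has_type (ctx_union \<Gamma> \<Delta>) (TSub t p u) \<sigma> (b + b') (e + e') (m + m') (f + f')"
  using assms(1)
proof (cases rule: has_type_TLamE)
  case (abs \<Gamma>t \<sigma>' b0 e0 m0 f0 A' ep mp fp)
  then show ?thesis
    using has_type_has_mtype.match[of \<Gamma>t t \<sigma> b0 e0 m0 f0 p A ep mp fp \<Delta> u b' e' m' f'] assms(2) by (simp add: ac_simps)
qed simp

lemma has_type_TSub_redexE:
  assumes "has_type \<Gamma> (TSub t p u) \<sigma> b e m f"
  obtains \<Gamma>1 \<Delta> A b1 e1 m1 f1 b2 e2 m2 f2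
  where "has_type \<Gamma>1 (TLam p t) (Arr A \<sigma>) (Suc b1) e1 m1 f1" and "has_mtype \<Delta> u A b2 e2 m2 f2"
    and "\<Gamma> = ctx_union \<Gamma>1 \<Delta>" and "b = b1 + b2" and "e = e1 + e2" and "m = m1 + m2" and "f = f1 + f2"
  using assms
proof (cases rule: has_type_TSubE)
  case (match \<Gamma>t bt et mt ft A ep mp fp \<Delta> bu eu mu fu)
  show ?thesis
    by (rule that[OF has_type_has_mtype.abs[OF match(6,7)] match(8)]) (simp_all add: match ac_simps)
qed

lemma same_typings_TSub:
  assumes "same_typings (TLam p t) (TLam p' t')" and "same_typings u u'"
  shows "same_typings (TSub t p u) (TSub t' p' u')"
proof -
  have "has_type \<Gamma> (TSub s' q' v') \<sigma> b e m f"
    if "same_typings (TLam q s) (TLam q' s')" and "same_typings v v'"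
      and "has_type \<Gamma> (TSub s q v) \<sigma> b e m f" for s s' q q' v v' \<Gamma> \<sigma> b e m f
    using that(3) by (elim has_type_TSub_redexE) (auto intro!: has_type_TSub_redexI
        simp: same_typings_has_type[OF that(1)] same_typings_has_mtype[OF that(2)])
  from this[OF assms] this[OF assms[THEN same_typings_sym]] show ?thesis
    unfolding same_typings_def by blast
qed

lemma alpha_same_typings: "alpha t t' \<Longrightarrow> same_typings t t'"
proof (induction rule: alpha.induct)
  case (a_lam \<pi> t p p' t')
  then show ?case
    using same_typings_trans[OF same_typings_TLam_rename same_typings_TLam] by blast
next
  case (a_sub \<pi> t p p' t' u u')
  then show ?case
    using same_typings_trans[OF same_typings_TLam_rename same_typings_TLam] same_typings_TSub by blast
qed (simp_all add: same_typings_TApp same_typings_TPair, simp add: same_typings_def)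

definition typing_transfer :: "nat \<times> nat \<times> nat \<Rightarrow> trm \<Rightarrow> trm \<Rightarrow> bool" where
  "typing_transfer d t t' \<longleftrightarrow> (\<forall>\<Gamma> \<sigma> b e m f. has_type \<Gamma> t \<sigma> b e m f \<longrightarrow>
     (\<exists>b' e' m'. has_type \<Gamma> t' \<sigma> b' e' m' f \<and> (b, e, m) = (b', e', m') + d))"

lemma typing_transferI:
  assumes "\<And>\<Gamma> \<sigma> b e m f. has_type \<Gamma> t \<sigma> b e m f \<Longrightarrow>
    \<exists>b' e' m'. has_type \<Gamma> t' \<sigma> b' e' m' f \<and> (b, e, m) = (b', e', m') + d"
  shows "typing_transfer d t t'"
  using assms by (simp add: typing_transfer_def)

lemma typing_transferE:
  assumes "typing_transfer d t t'" and "has_type \<Gamma> t \<sigma> b e m f"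
  obtains b' e' m' where "has_type \<Gamma> t' \<sigma> b' e' m' f" and "(b, e, m) = (b', e', m') + d"
  using assms unfolding typing_transfer_def by blast

lemma typing_transfer_trans:
  assumes "typing_transfer d t s" and "typing_transfer d' s r"
  shows "typing_transfer (d + d') t r"
proof (rule typing_transferI)
  fix \<Gamma> \<sigma> b e m f
  assume "has_type \<Gamma> t \<sigma> b e m f"
  with assms(1) obtain b1 e1 m1 where "has_type \<Gamma> s \<sigma> b1 e1 m1 f" "(b, e, m) = (b1, e1, m1) + d"
    by (rule typing_transferE)
  moreover from assms(2) this(1) obtain b2 e2 m2
    where "has_type \<Gamma> r \<sigma> b2 e2 m2 f" "(b1, e1, m1) = (b2, e2, m2) + d'"
    by (rule typing_transferE)
  ultimately have "has_type \<Gamma> r \<sigma> b2 e2 m2 f" "(b, e, m) = (b2, e2, m2) + (d + d')"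
    by (simp_all add: ac_simps)
  then show "\<exists>b' e' m'. has_type \<Gamma> r \<sigma> b' e' m' f \<and> (b, e, m) = (b', e', m') + (d + d')"
    by blast
qed

lemma typing_transfer_zeroI:
  assumes "\<And>\<Gamma> \<sigma> b e m f. has_type \<Gamma> t \<sigma> b e m f \<Longrightarrow> has_type \<Gamma> t' \<sigma> b e m f"
  shows "typing_transfer 0 t t'"
  using assms by (auto simp: typing_transfer_def zero_prod_def)

lemma same_typings_transfer: "same_typings t t' \<Longrightarrow> typing_transfer 0 t t'"
  by (rule typing_transfer_zeroI) (simp add: same_typings_def)

lemma typing_transfer_TLam:
  assumes "typing_transfer d t t'"
  shows "typing_transfer d (TLam p t) (TLam p t')"
proof (rule typing_transferI)
  fix \<Gamma> \<sigma> b e m f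
  assume "has_type \<Gamma> (TLam p t) \<sigma> b e m f"
  then show "\<exists>b' e' m'. has_type \<Gamma> (TLam p t') \<sigma> b' e' m' f \<and> (b, e, m) = (b', e', m') + d"
  proof (cases rule: has_type_TLamE)
    case (abs \<Gamma>t \<tau> b0 e0 m0 f0 A ep mp fp)
    obtain b1 e1 m1 where "has_type \<Gamma>t t' \<tau> b1 e1 m1 f0" "(b0, e0, m0) = (b1, e1, m1) + d"
      using assms abs(7) by (rule typing_transferE)
    with abs have "has_type \<Gamma> (TLam p t') \<sigma> (Suc b1) (e1 + ep) (m1 + mp) f"
      and "(b, e, m) = (Suc b1, e1 + ep, m1 + mp) + d"
      by (auto intro: has_type_has_mtype.abs) (cases d, simp)
    then show ?thesis by blast
  next
    case (abs_p \<Gamma>t \<tau> f0)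
    obtain b1 e1 m1 where "has_type \<Gamma>t t' \<tau> b1 e1 m1 f0" "(b, e, m) = (b1, e1, m1) + d"
      using assms abs_p(4) by (rule typing_transferE)
    with abs_p show ?thesis by (blast intro: has_type_has_mtype.abs_p)
  qed
qed

lemma typing_transfer_TApp:
  assumes "typing_transfer d t t'"
  shows "typing_transfer d (TApp t u) (TApp t' u)"
proof (rule typing_transferI)
  fix \<Gamma> \<sigma> b e m f
  assume "has_type \<Gamma> (TApp t u) \<sigma> b e m f"
  then show "\<exists>b' e' m'. has_type \<Gamma> (TApp t' u) \<sigma> b' e' m' f \<and> (b, e, m) = (b', e', m') + d"
  proof (cases rule: has_type_TAppE)
    case (app \<Gamma>t A bt et mt ft \<Delta> bu eu mu fu)
    obtain b1 e1 m1 where "has_type \<Gamma>t t' (Arr A \<sigma>) b1 e1 m1 ft" "(bt, et, mt) = (b1, e1, m1) + d"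
      using assms app(6) by (rule typing_transferE)
    with app have "has_type \<Gamma> (TApp t' u) \<sigma> (b1 + bu) (e1 + eu) (m1 + mu) f"
      and "(b, e, m) = (b1 + bu, e1 + eu, m1 + mu) + d"
      by (auto intro: has_type_has_mtype.app) (cases d, simp)
    then show ?thesis by blast
  next
    case (app_p f0)
    obtain b1 e1 m1 where "has_type \<Gamma> t' TyN b1 e1 m1 f0" "(b, e, m) = (b1, e1, m1) + d"
      using assms app_p(3) by (rule typing_transferE)
    with app_p show ?thesis by (blast intro: has_type_has_mtype.app_p)
  qed
qed

lemma typing_transfer_TSub:
  assumes "typing_transfer d t t'"
  shows "typing_transfer d (TSub t p u) (TSub t' p u)"
proof (rule typing_transferI)
  fix \<Gamma> \<sigma> b e m f
  assume "has_type \<Gamma> (TSub t p u) \<sigma> b e m f"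
  then show "\<exists>b' e' m'. has_type \<Gamma> (TSub t' p u) \<sigma> b' e' m' f \<and> (b, e, m) = (b', e', m') + d"
  proof (cases rule: has_type_TSubE)
    case (match \<Gamma>t bt et mt ft A ep mp fp \<Delta> bu eu mu fu)
    obtain b1 e1 m1 where "has_type \<Gamma>t t' \<sigma> b1 e1 m1 ft" "(bt, et, mt) = (b1, e1, m1) + d"
      using assms match(6) by (rule typing_transferE)
    with match have "has_type \<Gamma> (TSub t' p u) \<sigma> (b1 + bu) (e1 + eu + ep) (m1 + mu + mp) f"
      and "(b, e, m) = (b1 + bu, e1 + eu + ep, m1 + mu + mp) + d"
      by (auto intro: has_type_has_mtype.match) (cases d, simp)
    then show ?thesis by blast
  qed
qed

lemma typing_transfer_TSub_arg:
  assumes "typing_transfer d u u'" and "\<not> is_pvar p"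
  shows "typing_transfer d (TSub t p u) (TSub t p u')"
proof (rule typing_transferI)
  fix \<Gamma> \<sigma> b e m f
  assume "has_type \<Gamma> (TSub t p u) \<sigma> b e m f"
  then show "\<exists>b' e' m'. has_type \<Gamma> (TSub t p u') \<sigma> b' e' m' f \<and> (b, e, m) = (b', e', m') + d"
  proof (cases rule: has_type_TSubE)
    case (match \<Gamma>t bt et mt ft A ep mp fp \<Delta> bu eu mu fu)
    obtain \<tau> where A: "A = {#\<tau>#}"
      using ptyp_not_pvar_single[OF match(7) assms(2)] by blast
    obtain b1 e1 m1 where "has_type \<Delta> u' \<tau> b1 e1 m1 fu" "(bu, eu, mu) = (b1, e1, m1) + d"
      using assms(1) match(8) unfolding A has_mtype_single_iff by (rule typing_transferE)
    with match A have "has_type \<Gamma> (TSub t p u') \<sigma> (bt + b1) (et + e1 + ep) (mt + m1 + mp) f"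
      and "(b, e, m) = (bt + b1, et + e1 + ep, mt + m1 + mp) + d"
      by (auto intro: has_type_has_mtype.match simp: has_mtype_single_iff) (cases d, simp)
    then show ?thesis by blast
  qed
qed

lemma plug_Nil [simp]: "plug [] t = t"
  by (simp add: plug_def)

lemma plug_snoc [simp]: "plug (L @ [(q, v)]) t = TSub (plug L t) q v"
  by (simp add: plug_def)

lemma bvL_snoc [simp]: "bvL (L @ [(q, v)]) = bvL L \<union> pvars q"
  by (auto simp: bvL_def)

lemma typing_transfer_plug: "typing_transfer d t t' \<Longrightarrow> typing_transfer d (plug L t) (plug L t')"
  by (induction L rule: rev_induct) (auto intro: typing_transfer_TSub)

subsection \<open>Substitution\<close>

lemma has_mtype_split_ctx_union:
  assumes "has_mtype \<Delta> u (ctx_union \<Gamma>1 \<Gamma>2 x) b e m f"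
  obtains \<Delta>1 \<Delta>2 b1 e1 m1 f1 b2 e2 m2 f2
  where "has_mtype \<Delta>1 u (\<Gamma>1 x) b1 e1 m1 f1" and "has_mtype \<Delta>2 u (\<Gamma>2 x) b2 e2 m2 f2"
    and "\<Delta> = ctx_union \<Delta>1 \<Delta>2" and "b = b1 + b2" and "e = e1 + e2" and "m = m1 + m2" and "f = f1 + f2"
  using has_mtype_split[OF assms, of "\<Gamma>1 x" "\<Gamma>2 x"] that by (auto simp: ctx_union_def)

lemma ctx_under_binder:
  assumes "x \<notin> pvars p" and "ctx_dom \<Delta> \<inter> pvars p = {}"
  shows "restrict (ctx_union (remove \<Gamma> (PV x)) \<Delta>) p = restrict \<Gamma> p"
    and "remove (ctx_union (remove \<Gamma> (PV x)) \<Delta>) p = ctx_union (remove (remove \<Gamma> p) (PV x)) \<Delta>"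
  using assms by (simp_all add: restrict_ctx_union restrict_remove restrict_disjoint
      remove_ctx_union remove_disjoint remove_commute[of \<Gamma> p])

lemma has_type_nsubst:
  "has_type \<Gamma> t \<sigma> b e m f \<Longrightarrow> bv t \<inter> (fv u \<union> {x}) = {} \<Longrightarrow>
     (\<And>\<Delta> bu eu mu fu. has_mtype \<Delta> u (\<Gamma> x) bu eu mu fu \<Longrightarrow>
       has_type (ctx_union (remove \<Gamma> (PV x)) \<Delta>) (nsubst t x u) \<sigma> (b + bu) (e + eu) (m + mu) (f + fu))"
  "has_mtype \<Gamma> t A b e m f \<Longrightarrow> bv t \<inter> (fv u \<union> {x}) = {} \<Longrightarrow>
     (\<And>\<Delta> bu eu mu fu. has_mtype \<Delta> u (\<Gamma> x) bu eu mu fu \<Longrightarrow>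
       has_mtype (ctx_union (remove \<Gamma> (PV x)) \<Delta>) (nsubst t x u) A (b + bu) (e + eu) (m + mu) (f + fu))"
proof (induction rule: has_type_has_mtype.inducts)
  case (ax y \<sigma>)
  have "has_mtype \<Delta> u (if x = y then {#\<sigma>#} else {#}) bu eu mu fu"
    using ax.prems(2) by (simp only: ctx_one_apply)
  then show ?case
    by (cases "y = x") (simp_all add: remove_ctx_one has_mtype_single_iff has_type_has_mtype.ax)
next
  case (abs \<Gamma> t \<sigma> b e m f p A ep mp fp)
  have x: "x \<notin> pvars p" and \<Delta>: "ctx_dom \<Delta> \<inter> pvars p = {}"
    using abs.prems(1) has_mtype_ctx_dom_disjoint[OF abs.prems(2), of "pvars p"] by auto
  have "bv t \<inter> (fv u \<union> {x}) = {}" and "has_mtype \<Delta> u (\<Gamma> x) bu eu mu fu"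
    using abs.prems x by (auto simp: remove_def)
  then have "has_type (ctx_union (remove \<Gamma> (PV x)) \<Delta>) (nsubst t x u) \<sigma> (b + bu) (e + eu) (m + mu) (f + fu)"
    by (rule abs.IH)
  moreover have "ptyp (restrict (ctx_union (remove \<Gamma> (PV x)) \<Delta>) p) p A ep mp fp"
    using abs.hyps(2) by (simp only: ctx_under_binder(1)[OF x \<Delta>])
  ultimately have "has_type (remove (ctx_union (remove \<Gamma> (PV x)) \<Delta>) p) (TLam p (nsubst t x u))
      (Arr A \<sigma>) (Suc (b + bu)) (e + eu + ep) (m + mu + mp) (f + fu + fp)"
    by (rule has_type_has_mtype.abs)
  then show ?case
    by (simp add: ctx_under_binder(2)[OF x \<Delta>] ac_simps)
next
  case (abs_p \<Gamma> t \<tau> b e m f p)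
  have x: "x \<notin> pvars p" and \<Delta>: "ctx_dom \<Delta> \<inter> pvars p = {}"
    using abs_p.prems(1) has_mtype_ctx_dom_disjoint[OF abs_p.prems(2), of "pvars p"] by auto
  have "bv t \<inter> (fv u \<union> {x}) = {}" and "has_mtype \<Delta> u (\<Gamma> x) bu eu mu fu"
    using abs_p.prems x by (auto simp: remove_def)
  then have "has_type (ctx_union (remove \<Gamma> (PV x)) \<Delta>) (nsubst t x u) \<tau> (b + bu) (e + eu) (m + mu) (f + fu)"
    by (rule abs_p.IH)
  moreover have "tight_ctx (restrict (ctx_union (remove \<Gamma> (PV x)) \<Delta>) p)"
    using abs_p.hyps(3) by (simp only: ctx_under_binder(1)[OF x \<Delta>])
  ultimately have "has_type (remove (ctx_union (remove \<Gamma> (PV x)) \<Delta>) p) (TLam p (nsubst t x u)) TyM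
      (b + bu) (e + eu) (m + mu) (Suc (f + fu))"
    by (rule has_type_has_mtype.abs_p[OF _ abs_p.hyps(2)])
  then show ?case
    by (simp add: ctx_under_binder(2)[OF x \<Delta>])
next
  case (many_empty t)
  have "has_mtype \<Delta> u {#} bu eu mu fu"
    using many_empty.prems(2) by (simp only: ctx_empty_apply)
  then show ?case by simp
next
  case (many_add \<Gamma> t \<sigma> b e m f \<Gamma>' A b' e' m' f')
  obtain \<Delta>1 \<Delta>2 b1 e1 m1 f1 b2 e2 m2 f2 where split:
    "has_mtype \<Delta>1 u (\<Gamma> x) b1 e1 m1 f1" "has_mtype \<Delta>2 u (\<Gamma>' x) b2 e2 m2 f2"
    "\<Delta> = ctx_union \<Delta>1 \<Delta>2" "bu = b1 + b2" "eu = e1 + e2" "mu = m1 + m2" "fu = f1 + f2"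
    using many_add.prems(2) by (rule has_mtype_split_ctx_union)
  have "has_type (ctx_union (remove \<Gamma> (PV x)) \<Delta>1) (nsubst t x u) \<sigma> (b + b1) (e + e1) (m + m1) (f + f1)"
    using many_add.prems(1) split(1) by (intro many_add.IH(1)) auto
  moreover have "has_mtype (ctx_union (remove \<Gamma>' (PV x)) \<Delta>2) (nsubst t x u) A
      (b' + b2) (e' + e2) (m' + m2) (f' + f2)"
    using many_add.prems(1) split(2) by (intro many_add.IH(2)) auto
  ultimately show ?case
    using has_type_has_mtype.many_add split by (fastforce simp: remove_ctx_union ctx_union_ac ac_simps)
next
  case (app \<Gamma> t A \<sigma> bt et mt ft \<Gamma>' s bs es ms fs)
  obtain \<Delta>1 \<Delta>2 b1 e1 m1 f1 b2 e2 m2 f2 where split: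
    "has_mtype \<Delta>1 u (\<Gamma> x) b1 e1 m1 f1" "has_mtype \<Delta>2 u (\<Gamma>' x) b2 e2 m2 f2"
    "\<Delta> = ctx_union \<Delta>1 \<Delta>2" "bu = b1 + b2" "eu = e1 + e2" "mu = m1 + m2" "fu = f1 + f2"
    using app.prems(2) by (rule has_mtype_split_ctx_union)
  have "has_type (ctx_union (remove \<Gamma> (PV x)) \<Delta>1) (nsubst t x u) (Arr A \<sigma>)
      (bt + b1) (et + e1) (mt + m1) (ft + f1)"
    using app.prems(1) split(1) by (intro app.IH(1)) auto
  moreover have "has_mtype (ctx_union (remove \<Gamma>' (PV x)) \<Delta>2) (nsubst s x u) A
      (bs + b2) (es + e2) (ms + m2) (fs + f2)"
    using app.prems(1) split(2) by (intro app.IH(2)) auto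
  ultimately show ?case
    using has_type_has_mtype.app split by (fastforce simp: remove_ctx_union ctx_union_ac ac_simps)
next
  case (app_p \<Gamma> t b e m f s)
  have "has_type (ctx_union (remove \<Gamma> (PV x)) \<Delta>) (nsubst t x u) TyN (b + bu) (e + eu) (m + mu) (f + fu)"
    using app_p.prems by (intro app_p.IH) auto
  then show ?case by (simp add: has_type_has_mtype.app_p)
next
  case (pair \<Gamma> t A bt et mt ft \<Gamma>' s B bs es ms fs)
  obtain \<Delta>1 \<Delta>2 b1 e1 m1 f1 b2 e2 m2 f2 where split:
    "has_mtype \<Delta>1 u (\<Gamma> x) b1 e1 m1 f1" "has_mtype \<Delta>2 u (\<Gamma>' x) b2 e2 m2 f2"
    "\<Delta> = ctx_union \<Delta>1 \<Delta>2" "bu = b1 + b2" "eu = e1 + e2" "mu = m1 + m2" "fu = f1 + f2"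
    using pair.prems(2) by (rule has_mtype_split_ctx_union)
  have "has_mtype (ctx_union (remove \<Gamma> (PV x)) \<Delta>1) (nsubst t x u) A (bt + b1) (et + e1) (mt + m1) (ft + f1)"
    using pair.prems(1) split(1) by (intro pair.IH(1)) auto
  moreover have "has_mtype (ctx_union (remove \<Gamma>' (PV x)) \<Delta>2) (nsubst s x u) B
      (bs + b2) (es + e2) (ms + m2) (fs + f2)"
    using pair.prems(1) split(2) by (intro pair.IH(2)) auto
  ultimately show ?case
    using has_type_has_mtype.pair split by (fastforce simp: remove_ctx_union ctx_union_ac ac_simps)
next
  case (pair_p t s)
  have "has_mtype \<Delta> u {#} bu eu mu fu"
    using pair_p.prems(2) by (simp only: ctx_empty_apply)
  then show ?case by (simp add: has_type_has_mtype.pair_p[simplified])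
next
  case (match \<Gamma> t \<sigma> bt et mt ft p A ep mp fp \<Gamma>' s bs es ms fs)
  have x: "x \<notin> pvars p"
    using match.prems(1) by auto
  obtain \<Delta>1 \<Delta>2 b1 e1 m1 f1 b2 e2 m2 f2 where split:
    "has_mtype \<Delta>1 u (remove \<Gamma> p x) b1 e1 m1 f1" "has_mtype \<Delta>2 u (\<Gamma>' x) b2 e2 m2 f2"
    "\<Delta> = ctx_union \<Delta>1 \<Delta>2" "bu = b1 + b2" "eu = e1 + e2" "mu = m1 + m2" "fu = f1 + f2"
    using match.prems(2) by (rule has_mtype_split_ctx_union)
  have \<Delta>1: "ctx_dom \<Delta>1 \<inter> pvars p = {}"
    using match.prems(1) has_mtype_ctx_dom_disjoint[OF split(1), of "pvars p"] by auto
  have "has_type (ctx_union (remove \<Gamma> (PV x)) \<Delta>1) (nsubst t x u) \<sigma> (bt + b1) (et + e1) (mt + m1) (ft + f1)"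
    using match.prems(1) split(1) x by (intro match.IH(1)) (auto simp: remove_def)
  moreover have "ptyp (restrict (ctx_union (remove \<Gamma> (PV x)) \<Delta>1) p) p A ep mp fp"
    using match.hyps(2) by (simp only: ctx_under_binder(1)[OF x \<Delta>1])
  moreover have "has_mtype (ctx_union (remove \<Gamma>' (PV x)) \<Delta>2) (nsubst s x u) A
      (bs + b2) (es + e2) (ms + m2) (fs + f2)"
    using match.prems(1) split(2) by (intro match.IH(2)) auto
  ultimately have "has_type (ctx_union (remove (ctx_union (remove \<Gamma> (PV x)) \<Delta>1) p)
      (ctx_union (remove \<Gamma>' (PV x)) \<Delta>2)) (TSub (nsubst t x u) p (nsubst s x u)) \<sigma>
      (bt + b1 + (bs + b2)) (et + e1 + (es + e2) + ep) (mt + m1 + (ms + m2) + mp) (ft + f1 + (fs + f2) + fp)"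
    by (rule has_type_has_mtype.match)
  then show ?case
    using split by (simp only: ctx_under_binder(2)[OF x \<Delta>1]) (simp add: remove_ctx_union ctx_union_ac ac_simps)
qed

subsection \<open>Root steps\<close>

lemma typing_transfer_beta: "typing_transfer (1, 0, 0) (TApp (TLam p s) u) (TSub s p u)"
proof (rule typing_transferI)
  fix \<Gamma> \<sigma> b e m f
  assume "has_type \<Gamma> (TApp (TLam p s) u) \<sigma> b e m f"
  then show "\<exists>b' e' m'. has_type \<Gamma> (TSub s p u) \<sigma> b' e' m' f \<and> (b, e, m) = (b', e', m') + (1, 0, 0)"
  proof (cases rule: has_type_TAppE)
    case (app \<Gamma>1 A bt et mt ft \<Delta> bu eu mu fu)
    obtain b0 where "bt = Suc b0"
      using app(6) by (cases rule: has_type_TLamE) auto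
    with app have "has_type \<Gamma> (TSub s p u) \<sigma> (b0 + bu) e m f"
      using has_type_TSub_redexI[of \<Gamma>1 p s A \<sigma> b0 et mt ft \<Delta> u bu eu mu fu] by simp
    with \<open>b = bt + bu\<close> \<open>bt = Suc b0\<close> show ?thesis by auto
  next
    case (app_p f0)
    then show ?thesis by (auto elim: has_type_TLamE)
  qed
qed

lemma typing_transfer_subst:
  assumes "bv t \<inter> (fv u \<union> {x}) = {}"
  shows "typing_transfer (0, 1, 0) (TSub t (PV x) u) (nsubst t x u)"
proof (rule typing_transferI)
  fix \<Gamma> \<sigma> b e m f
  assume "has_type \<Gamma> (TSub t (PV x) u) \<sigma> b e m f"
  then show "\<exists>b' e' m'. has_type \<Gamma> (nsubst t x u) \<sigma> b' e' m' f \<and> (b, e, m) = (b', e', m') + (0, 1, 0)"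
  proof (cases rule: has_type_TSubE)
    case (match \<Gamma>t bt et mt ft A ep mp fp \<Delta> bu eu mu fu)
    from match(7) have "A = \<Gamma>t x" and "ep = 1" and "mp = 0" and "fp = 0"
      by (auto elim!: ptyp_PVE simp: restrict_def ctx_one_def fun_eq_iff split: if_splits)
    with match has_type_nsubst(1)[OF match(6) assms, of \<Delta> bu eu mu fu] show ?thesis
      by auto
  qed
qed

lemma typing_transfer_pair_match:
  assumes "pvars p2 \<inter> fv u1 = {}"
  shows "typing_transfer (0, 0, 1) (TSub s (PP p1 p2) (TPair u1 u2)) (TSub (TSub s p1 u1) p2 u2)"
proof (rule typing_transferI)
  fix \<Gamma> \<sigma> b e m f
  assume "has_type \<Gamma> (TSub s (PP p1 p2) (TPair u1 u2)) \<sigma> b e m f"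
  then show "\<exists>b' e' m'. has_type \<Gamma> (TSub (TSub s p1 u1) p2 u2) \<sigma> b' e' m' f
      \<and> (b, e, m) = (b', e', m') + (0, 0, 1)"
  proof (cases rule: has_type_TSubE)
    case (match \<Gamma>s bs es ms fs A ep mp fp \<Delta> bu eu mu fu)
    from match(7) show ?thesis
    proof (cases rule: ptyp_PPE)
      case (pat_prod \<Gamma>1 A1 ep1 mp1 fp1 \<Gamma>2 A2 ep2 mp2 fp2)
      have "has_type \<Delta> (TPair u1 u2) (Prod A1 A2) bu eu mu fu"
        using match(8) pat_prod(2) by (simp add: has_mtype_single_iff)
      then obtain \<Delta>1 \<Delta>2 b1 e1 m1 f1 b2 e2 m2 f2 where
        u1: "has_mtype \<Delta>1 u1 A1 b1 e1 m1 f1" and u2: "has_mtype \<Delta>2 u2 A2 b2 e2 m2 f2" and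
        split: "\<Delta> = ctx_union \<Delta>1 \<Delta>2" "bu = b1 + b2" "eu = e1 + e2" "mu = m1 + m2" "fu = f1 + f2"
        by (cases rule: has_type_TPairE) auto
      have \<Gamma>1: "restrict \<Gamma>s p1 = \<Gamma>1" and \<Gamma>2: "restrict \<Gamma>s p2 = \<Gamma>2"
        using restrict_PP_split[OF pat_prod(1,8) ptyp_ctx_dom[OF pat_prod(6)] ptyp_ctx_dom[OF pat_prod(7)]]
        by simp_all
      have \<Delta>1: "ctx_dom \<Delta>1 \<inter> pvars p2 = {}"
        using has_mtype_ctx_dom_disjoint[OF u1] assms by blast
      have "has_type (ctx_union (remove \<Gamma>s p1) \<Delta>1) (TSub s p1 u1) \<sigma>
          (bs + b1) (es + e1 + ep1) (ms + m1 + mp1) (fs + f1 + fp1)"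
        using match(6) _ u1 by (rule has_type_has_mtype.match) (simp add: \<Gamma>1 pat_prod(6))
      moreover have "ptyp (restrict (ctx_union (remove \<Gamma>s p1) \<Delta>1) p2) p2 A2 ep2 mp2 fp2"
        using pat_prod(7,8) \<Gamma>2 \<Delta>1 by (simp add: restrict_ctx_union restrict_remove restrict_disjoint Int_commute)
      ultimately have "has_type (ctx_union (remove (ctx_union (remove \<Gamma>s p1) \<Delta>1) p2) \<Delta>2)
          (TSub (TSub s p1 u1) p2 u2) \<sigma> (bs + b1 + b2) (es + e1 + ep1 + e2 + ep2)
          (ms + m1 + mp1 + m2 + mp2) (fs + f1 + fp1 + f2 + fp2)"
        using u2 by (rule has_type_has_mtype.match)
      then show ?thesis
        using match pat_prod split \<Delta>1
        by (simp add: remove_ctx_union remove_disjoint remove_PP ctx_union_ac ac_simps)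
    next
      case pat_p
      then show ?thesis
        using match(8) by (auto simp: has_mtype_single_iff elim: has_type_TPairE)
    qed
  qed
qed

subsection \<open>Pulling list contexts out of redexes\<close>

lemma typing_transfer_TApp_TSub:
  assumes "pvars q \<inter> fv u = {}"
  shows "typing_transfer 0 (TApp (TSub t q w) u) (TSub (TApp t u) q w)"
proof (rule typing_transfer_zeroI)
  fix \<Gamma> \<sigma> b e m f
  assume "has_type \<Gamma> (TApp (TSub t q w) u) \<sigma> b e m f"
  then show "has_type \<Gamma> (TSub (TApp t u) q w) \<sigma> b e m f"
  proof (cases rule: has_type_TAppE)
    case (app \<Gamma>1 A bt et mt ft \<Delta> bu eu mu fu)
    from app(6) show ?thesis
    proof (cases rule: has_type_TSubE)
      case (match \<Gamma>t bt' et' mt' ft' B ep mp fp \<Delta>w bw ew mw fw)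
      have \<Delta>: "ctx_dom \<Delta> \<inter> pvars q = {}"
        using has_mtype_ctx_dom_disjoint[OF app(7)] assms by blast
      have "has_type (ctx_union \<Gamma>t \<Delta>) (TApp t u) \<sigma> (bt' + bu) (et' + eu) (mt' + mu) (ft' + fu)"
        using match(6) app(7) by (rule has_type_has_mtype.app)
      moreover have "ptyp (restrict (ctx_union \<Gamma>t \<Delta>) q) q B ep mp fp"
        using match(7) \<Delta> by (simp add: restrict_ctx_union restrict_disjoint)
      ultimately have "has_type (ctx_union (remove (ctx_union \<Gamma>t \<Delta>) q) \<Delta>w) (TSub (TApp t u) q w) \<sigma>
          (bt' + bu + bw) (et' + eu + ew + ep) (mt' + mu + mw + mp) (ft' + fu + fw + fp)"
        using match(8) by (rule has_type_has_mtype.match)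
      then show ?thesis
        using app match \<Delta> by (simp add: remove_ctx_union remove_disjoint ctx_union_ac ac_simps)
    qed
  next
    case (app_p f0)
    from app_p(3) show ?thesis
    proof (cases rule: has_type_TSubE)
      case (match \<Gamma>t bt et mt ft B ep mp fp \<Delta>w bw ew mw fw)
      have "has_type \<Gamma>t (TApp t u) TyN bt et mt (Suc ft)"
        using match(6) by (rule has_type_has_mtype.app_p)
      from has_type_has_mtype.match[OF this match(7,8)] show ?thesis
        using app_p match by simp
    qed
  qed
qed

text \<open>For a variable pattern the argument may have several derivations, whose pattern typings
  could not be merged into one; a non-variable pattern has a single type.\<close>

lemma typing_transfer_TSub_TSub:
  assumes "\<not> is_pvar P" and "pvars q \<inter> fv s = {}"
  shows "typing_transfer 0 (TSub s P (TSub w q v)) (TSub (TSub s P w) q v)"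
proof (rule typing_transfer_zeroI)
  fix \<Gamma> \<sigma> b e m f
  assume "has_type \<Gamma> (TSub s P (TSub w q v)) \<sigma> b e m f"
  then show "has_type \<Gamma> (TSub (TSub s P w) q v) \<sigma> b e m f"
  proof (cases rule: has_type_TSubE)
    case outer: (match \<Gamma>s bs es ms fs A eP mP fP \<Delta> bu eu mu fu)
    obtain \<tau> where A: "A = {#\<tau>#}"
      using ptyp_not_pvar_single[OF outer(7) assms(1)] by blast
    have \<Gamma>s: "ctx_dom (remove \<Gamma>s P) \<inter> pvars q = {}"
      using has_type_ctx_dom(1)[OF outer(6)] assms(2) by (auto simp: ctx_dom_def remove_def)
    from outer(8) have "has_type \<Delta> (TSub w q v) \<tau> bu eu mu fu"
      by (simp add: A has_mtype_single_iff)
    then show ?thesis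
    proof (cases rule: has_type_TSubE)
      case inner: (match \<Gamma>w bw ew mw fw B eq mq fq \<Delta>v bv ev mv fv)
      have "has_type (ctx_union (remove \<Gamma>s P) \<Gamma>w) (TSub s P w) \<sigma>
          (bs + bw) (es + ew + eP) (ms + mw + mP) (fs + fw + fP)"
        using outer(6,7) inner(6) by (simp add: A has_mtype_single_iff has_type_has_mtype.match)
      moreover have "ptyp (restrict (ctx_union (remove \<Gamma>s P) \<Gamma>w) q) q B eq mq fq"
        using inner(7) \<Gamma>s by (simp add: restrict_ctx_union restrict_disjoint)
      ultimately have "has_type (ctx_union (remove (ctx_union (remove \<Gamma>s P) \<Gamma>w) q) \<Delta>v)
          (TSub (TSub s P w) q v) \<sigma> (bs + bw + bv) (es + ew + eP + ev + eq) (ms + mw + mP + mv + mq)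
          (fs + fw + fP + fv + fq)"
        using inner(8) by (rule has_type_has_mtype.match)
      then show ?thesis
        using outer inner \<Gamma>s by (simp add: remove_ctx_union remove_disjoint ctx_union_ac ac_simps)
    qed
  qed
qed

lemma typing_transfer_TApp_plug:
  assumes "bvL L \<inter> fv u = {}"
  shows "typing_transfer 0 (TApp (plug L v) u) (plug L (TApp v u))"
  using assms
proof (induction L rule: rev_induct)
  case Nil
  then show ?case by (simp add: typing_transfer_zeroI)
next
  case (snoc qw L)
  obtain q w where qw: "qw = (q, w)" by fastforce
  have "typing_transfer (0 + 0) (TApp (TSub (plug L v) q w) u) (TSub (plug L (TApp v u)) q w)"
    using snoc.prems snoc.IH qw
    by (intro typing_transfer_trans[OF typing_transfer_TApp_TSub typing_transfer_TSub]) auto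
  then show ?case by (simp add: qw)
qed

lemma typing_transfer_TSub_plug:
  assumes "\<not> is_pvar P" and "bvL L \<inter> fv s = {}"
  shows "typing_transfer 0 (TSub s P (plug L v)) (plug L (TSub s P v))"
  using assms(2)
proof (induction L rule: rev_induct)
  case Nil
  then show ?case by (simp add: typing_transfer_zeroI)
next
  case (snoc qw L)
  obtain q w where qw: "qw = (q, w)" by fastforce
  have "typing_transfer (0 + 0) (TSub s P (TSub (plug L v) q w)) (TSub (plug L (TSub s P v)) q w)"
    using assms(1) snoc.prems snoc.IH qw
    by (intro typing_transfer_trans[OF typing_transfer_TSub_TSub typing_transfer_TSub]) auto
  then show ?case by (simp add: qw)
qed

subsection \<open>Subject reduction\<close>

lemma typing_transfer_same_typings:
  assumes "same_typings t t'" and "typing_transfer d t' r'" and "same_typings r r'"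
  shows "typing_transfer d t r"
  using typing_transfer_trans[OF typing_transfer_trans[OF same_typings_transfer[OF assms(1)] assms(2)]
      same_typings_transfer[OF same_typings_sym[OF assms(3)]]]
  by simp

primrec step_cost :: "kind \<Rightarrow> nat \<times> nat \<times> nat" where
  "step_cost KB = (1, 0, 0)"
| "step_cost KE = (0, 1, 0)"
| "step_cost KM = (0, 0, 1)"

lemma typing_transfer_hsteps: "(R, r) \<in> hsteps t \<Longrightarrow> typing_transfer (step_cost R) t r"
proof (induction t arbitrary: R r)
  case (TLam p t)
  then obtain t1 where "(R, t1) \<in> hsteps t" and "alpha r (TLam p t1)"
    by auto
  with TLam.IH show ?case
    by (blast intro: typing_transfer_same_typings same_typings_refl alpha_same_typings typing_transfer_TLam)
next
  case (TApp t u)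
  from TApp.prems consider
    (beta) L p s u' where "R = KB" and "alpha (TApp t u) (TApp (plug L (TLam p s)) u')"
      and "bvL L \<inter> fv u' = {}" and "alpha r (plug L (TSub s p u'))"
  | (left) t1 where "(R, t1) \<in> hsteps t" and "alpha r (TApp t1 u)"
    by auto
  then show ?case
  proof cases
    case beta
    have "typing_transfer (0 + (1, 0, 0)) (TApp (plug L (TLam p s)) u') (plug L (TSub s p u'))"
      using typing_transfer_TApp_plug[OF beta(3)] typing_transfer_plug[OF typing_transfer_beta]
      by (rule typing_transfer_trans)
    with beta show ?thesis
      by (auto intro: typing_transfer_same_typings alpha_same_typings)
  next
    case left
    with TApp.IH(1) show ?thesis
      by (blast intro: typing_transfer_same_typings same_typings_refl alpha_same_typings typing_transfer_TApp)
  qed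
next
  case (TSub t p u)
  from TSub.prems consider
    (left) t1 where "(R, t1) \<in> hsteps t" and "alpha r (TSub t1 p u)"
  | (m) s p1 p2 L u1 u2 where "R = KM" and "alpha (TSub t p u) (TSub s (PP p1 p2) (plug L (TPair u1 u2)))"
      and "bvL L \<inter> fv s = {}" and "pvars p2 \<inter> fv u1 = {}"
      and "alpha r (plug L (TSub (TSub s p1 u1) p2 u2))"
  | (e) x t0 where "R = KE" and "p = PV x" and "alpha t t0" and "bv t0 \<inter> (fv u \<union> {x}) = {}"
      and "alpha r (nsubst t0 x u)"
  | (right) u1 where "\<not> is_pvar p" and "(R, u1) \<in> hsteps u" and "alpha r (TSub t p u1)"
    by (auto split: if_splits)
  then show ?case
  proof cases
    case left
    with TSub.IH(1) show ?thesis
      by (blast intro: typing_transfer_same_typings same_typings_refl alpha_same_typings typing_transfer_TSub)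
  next
    case m
    have "typing_transfer (0 + (0, 0, 1)) (TSub s (PP p1 p2) (plug L (TPair u1 u2)))
        (plug L (TSub (TSub s p1 u1) p2 u2))"
      using typing_transfer_TSub_plug[OF _ m(3)] typing_transfer_plug[OF typing_transfer_pair_match[OF m(4)]]
      by (rule typing_transfer_trans) (simp add: is_pvar_def)
    with m show ?thesis
      by (auto intro: typing_transfer_same_typings alpha_same_typings)
  next
    case e
    have "same_typings (TSub t p u) (TSub t0 p u)"
      using e(3) by (blast intro: same_typings_TSub same_typings_TLam alpha_same_typings same_typings_refl)
    with e typing_transfer_subst[OF e(4)] show ?thesis
      by (auto intro: typing_transfer_same_typings alpha_same_typings)
  next
    case right
    with TSub.IH(2) show ?thesis
      by (blast intro: typing_transfer_same_typings same_typings_refl alpha_same_typings typing_transfer_TSub_arg)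
  qed
qed simp_all

theorem lemma6:
  assumes "wf_trm t"
    and "has_type \<Gamma> t \<sigma> b e m f"
    and "(R, t') \<in> hsteps t"
  shows "\<exists>b' e' m'. has_type \<Gamma> t' \<sigma> b' e' m' f
           \<and> (R = KB \<longrightarrow> b = Suc b' \<and> e' = e \<and> m' = m)
           \<and> (R = KE \<longrightarrow> b' = b \<and> e = Suc e' \<and> m' = m)
           \<and> (R = KM \<longrightarrow> b' = b \<and> e' = e \<and> m = Suc m')"
proof -
  obtain b' e' m' where "has_type \<Gamma> t' \<sigma> b' e' m' f" and "(b, e, m) = (b', e', m') + step_cost R"
    using typing_transfer_hsteps[OF assms(3)] assms(2) by (rule typing_transferE)
  then show ?thesis
    by (cases R) auto
qed

end
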